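(* Let $\alpha>-1$ and $X=L^2[(-1,1);w]$ with the Gegenbauer weight $w(t)=(1-t^2)^\alpha$, inner product $(p,q)_w=\int_{-1}^1p(t)\overline{q(t)}w(t)\,\mathrm dt$ and norm $\|p\|_X=\sqrt{(p,p)_w}$. Let $p_0,p_1,\dots$ be the orthonormal polynomials with respect to $w$ (positive leading coefficients). Fix $n\ge1$, let $A_{n,1}$ be the $n\times n$ upper triangular matrix with entries $a_{i,j}=\int_{-1}^1p_j'(t)p_{i-1}(t)w(t)\,\mathrm dt$, $i,j=1,\dots,n$, and let $C_n=[c_{i,j}]_{i,j=1}^n=(A_{n,1}^T)^{-1}A_{n,1}^{-1}$. For $m\ge1$ let $E_m$ be the $m\times m$ principal submatrix of $C_n$ on the odd indices $1,3,\dots,2m-1$ (a tridiagonal matrix with diagonal $c_{1,1},c_{3,3},\dots,c_{2m-1,2m-1}$ and off-diagonal entries $c_{1,3},\dots,c_{2m-3,2m-1}$), and $\widehat E_m$ the $m\times m$ principal submatrix on the even indices $2,4,\dots,2m$ (diagonal $c_{2,2},\dots,c_{2m,2m}$, off-diagonal entries $c_{2,4},\dots,c_{2m-2,2m}$). Then $$M_n(\alpha)=\sup_{p\in\mathcal P_n\setminus\{0\}}\frac{\|p'\|_X}{\|p\|_X}=\frac{1}{\sqrt{\min\bigl\{\lambda_{\min}(E_{[(n+1)/2]}),\,\lambda_{\min}(\widehat E_{[n/2]})\bigr\}}},$$ where $\mathcal P_n$ is the set of algebraic polynomials of degree at most $n$, $[x]$ is the integer part of $x$, and $\lambda_{\min}$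 denotes the smallest eigenvalue (for $n=1$ only $E_1$ is present). *)

theory Defs
  imports "HOL-Analysis.Analysis" "HOL-Computational_Algebra.Polynomial"
    "Jordan_Normal_Form.Char_Poly" "Jordan_Normal_Form.Gauss_Jordan_Elimination"
begin

definition gweight :: "real \<Rightarrow> real \<Rightarrow> real" where
  "gweight \<alpha> t = (1 - t\<^sup>2) powr \<alpha>"

definition wip :: "real \<Rightarrow> (real \<Rightarrow> real) \<Rightarrow> (real \<Rightarrow> real) \<Rightarrow> real" where
  "wip \<alpha> f g = (LINT t:{-1<..<1}|lborel. f t * g t * gweight \<alpha> t)"

definition wnorm :: "real \<Rightarrow> complex poly \<Rightarrow> real" where
  "wnorm \<alpha> p = sqrt (LINT t:{-1<..<1}|lborel. (cmod (poly p (of_real t)))\<^sup>2 * gweight \<alpha> t)"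

definition orthonormal_polys :: "real \<Rightarrow> (nat \<Rightarrow> real poly) \<Rightarrow> bool" where
  "orthonormal_polys \<alpha> p \<longleftrightarrow>
     (\<forall>k. degree (p k) = k \<and> lead_coeff (p k) > 0) \<and>
     (\<forall>j k. wip \<alpha> (poly (p j)) (poly (p k)) = (if j = k then 1 else 0))"

definition markov_const :: "real \<Rightarrow> nat \<Rightarrow> real" where
  "markov_const \<alpha> n =
     Sup {wnorm \<alpha> (pderiv p) / wnorm \<alpha> p | p. p \<noteq> 0 \<and> degree p \<le> n}"

text \<open>The matrix A_{n,1} (0-based: entry (i,j) is a_{i+1,j+1}).\<close>
definition A_mat :: "real \<Rightarrow> (nat \<Rightarrow> real poly) \<Rightarrow> nat \<Rightarrow> real mat" where
  "A_mat \<alpha> p n = mat n n (\<lambda>(i,j). wip \<alpha> (poly (pderiv (p (j+1)))) (poly (p i)))"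

definition C_mat :: "real \<Rightarrow> (nat \<Rightarrow> real poly) \<Rightarrow> nat \<Rightarrow> real mat" where
  "C_mat \<alpha> p n = the (mat_inverse (transpose_mat (A_mat \<alpha> p n))) * the (mat_inverse (A_mat \<alpha> p n))"

text \<open>Principal submatrices on odd indices 1,3,..,2m-1 and even indices 2,4,..,2m (1-based).\<close>
definition E_odd :: "real mat \<Rightarrow> nat \<Rightarrow> real mat" where
  "E_odd C m = mat m m (\<lambda>(i,j). C $$ (2*i, 2*j))"

definition E_even :: "real mat \<Rightarrow> nat \<Rightarrow> real mat" where
  "E_even C m = mat m m (\<lambda>(i,j). C $$ (2*i+1, 2*j+1))"

definition lambda_min :: "real mat \<Rightarrow> real" where
  "lambda_min E = Min {l. eigenvalue E l}"

end

theory Submission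
  imports Defs
begin

text \<open>Expand a real polynomial \<open>q\<close> of degree at most \<open>n\<close> in the orthonormal basis and put
  \<open>y\<^sub>j = (q, p\<^sub>j\<^sub>+\<^sub>1)\<close>. The coefficients of \<open>q'\<close> with respect to \<open>p\<^sub>0, \<dots>, p\<^sub>n\<^sub>-\<^sub>1\<close> form the
  vector \<open>z = A\<^sub>n\<^sub>,\<^sub>1 y\<close>, so \<open>\<parallel>q'\<parallel>\<^sup>2 = |z|\<^sup>2\<close>, while \<open>\<parallel>q\<parallel>\<^sup>2 \<ge> |y|\<^sup>2 = z\<^sup>T C\<^sub>n z\<close> with equality
  when \<open>(q, p\<^sub>0) = 0\<close>. Hence \<open>M\<^sub>n(\<alpha>)\<^sup>-\<^sup>2\<close> is the minimum of the Rayleigh quotient of \<open>C\<^sub>n\<close>, i.e. its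
  least eigenvalue; complex polynomials reduce to their real and imaginary parts.

  Since the weight is even, the reflected family \<open>(-1)\<^sup>k p\<^sub>k(-t)\<close> is again orthonormal with
  positive leading coefficients, hence equal to \<open>(p\<^sub>k)\<close>. This parity makes \<open>A\<^sub>n\<^sub>,\<^sub>1\<close>, and with it
  \<open>C\<^sub>n\<close>, a checkerboard matrix, whose quadratic form splits into those of the odd and the even
  principal submatrices, so that the least eigenvalue of \<open>C\<^sub>n\<close> is the smaller of theirs.\<close>

section \<open>Minimum of the Rayleigh quotient\<close>

text \<open>A vector of length \<open>m\<close> is a function on \<open>nat\<close> of which only the first \<open>m\<close> values matter.\<close>

definition sum_sq :: "nat \<Rightarrow> (nat \<Rightarrow> real) \<Rightarrow> real" where
  "sum_sq m x = (\<Sum>i<m. (x i)\<^sup>2)"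

definition quad_form :: "real mat \<Rightarrow> nat \<Rightarrow> (nat \<Rightarrow> real) \<Rightarrow> real" where
  "quad_form E m x = (\<Sum>i<m. \<Sum>j<m. x i * E $$ (i,j) * x j)"

definition mat_app :: "real mat \<Rightarrow> nat \<Rightarrow> (nat \<Rightarrow> real) \<Rightarrow> nat \<Rightarrow> real" where
  "mat_app B m x i = (\<Sum>j<m. B $$ (i,j) * x j)"

definition is_min_rayleigh :: "real mat \<Rightarrow> nat \<Rightarrow> real \<Rightarrow> bool" where
  "is_min_rayleigh E m \<rho> \<longleftrightarrow>
     (\<forall>x. \<rho> * sum_sq m x \<le> quad_form E m x) \<and> (\<exists>x. sum_sq m x = 1 \<and> quad_form E m x = \<rho>)"

lemma sum_sq_nonneg: "0 \<le> sum_sq m x"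
  unfolding sum_sq_def by (simp add: sum_nonneg)

lemma sum_sq_eq_0_iff: "sum_sq m x = 0 \<longleftrightarrow> (\<forall>i<m. x i = 0)"
  unfolding sum_sq_def by (subst sum_nonneg_eq_0_iff) auto

lemma abs_le_1_if_sum_sq_eq_1:
  assumes "sum_sq m x = 1" "i < m"
  shows "\<bar>x i\<bar> \<le> 1"
proof -
  have "(x i)\<^sup>2 \<le> sum_sq m x"
    unfolding sum_sq_def using assms(2) by (intro member_le_sum) auto
  with assms(1) show ?thesis by (simp add: abs_square_le_1)
qed

lemma sum_sq_scale: "sum_sq m (\<lambda>i. a * x i) = a\<^sup>2 * sum_sq m x"
  unfolding sum_sq_def by (simp add: sum_distrib_left power_mult_distrib)

lemma quad_form_scale: "quad_form E m (\<lambda>i. a * x i) = a\<^sup>2 * quad_form E m x"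
  unfolding quad_form_def by (simp add: sum_distrib_left power2_eq_square algebra_simps)

lemma quad_form_eq_0_if_sum_sq_eq_0: "sum_sq m x = 0 \<Longrightarrow> quad_form E m x = 0"
  unfolding quad_form_def by (simp add: sum_sq_eq_0_iff)

lemma quad_form_on_unit_sphere_ge:
  assumes "sum_sq m x = 1"
  shows "- (\<Sum>i<m. \<Sum>j<m. \<bar>E $$ (i,j)\<bar>) \<le> quad_form E m x"
proof -
  have "- \<bar>E $$ (i,j)\<bar> \<le> x i * E $$ (i,j) * x j" if "i < m" "j < m" for i j
  proof -
    have "\<bar>x i\<bar> * \<bar>E $$ (i,j)\<bar> * \<bar>x j\<bar> \<le> 1 * \<bar>E $$ (i,j)\<bar> * 1"
      using abs_le_1_if_sum_sq_eq_1[OF assms] that by (intro mult_mono) auto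
    then have "\<bar>x i * E $$ (i,j) * x j\<bar> \<le> \<bar>E $$ (i,j)\<bar>" by (simp add: abs_mult)
    then show ?thesis by linarith
  qed
  then have "(\<Sum>i<m. \<Sum>j<m. - \<bar>E $$ (i,j)\<bar>) \<le> quad_form E m x"
    unfolding quad_form_def by (intro sum_mono) auto
  then show ?thesis by (simp add: sum_negf)
qed

lemma bounded_coordinates_convergent_subseq:
  fixes X :: "nat \<Rightarrow> nat \<Rightarrow> real"
  assumes "\<And>k i. i < m \<Longrightarrow> \<bar>X k i\<bar> \<le> 1"
  shows "\<exists>r. strict_mono r \<and> (\<forall>i<m. convergent (\<lambda>k. X (r k) i))"
  using assms
proof (induction m)
  case 0
  show ?case using strict_mono_id by auto
next
  case (Suc m)
  then obtain r where r: "strict_mono r" "\<forall>i<m. convergent (\<lambda>k. X (r k) i)" by auto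
  have "bounded (range (\<lambda>k. X (r k) m))"
    using Suc.prems[of m] unfolding bounded_iff by (auto intro!: exI[of _ 1])
  then obtain l r' where r': "strict_mono r'" "((\<lambda>k. X (r k) m) \<circ> r') \<longlonglongrightarrow> l"
    using bounded_imp_convergent_subsequence by blast
  have "convergent (\<lambda>k. X ((r \<circ> r') k) i)" if "i < Suc m" for i
  proof (cases "i = m")
    case True
    then show ?thesis using r' by (auto simp: convergent_def o_def)
  next
    case False
    with r that obtain L where "(\<lambda>k. X (r k) i) \<longlonglongrightarrow> L"
      unfolding convergent_def by (metis less_SucE)
    from LIMSEQ_subseq_LIMSEQ[OF this r'(1)] show ?thesis by (auto simp: convergent_def o_def)
  qed
  moreover have "strict_mono (r \<circ> r')" using r r' by (simp add: strict_mono_o)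
  ultimately show ?case by blast
qed

lemma quad_form_attains_min_on_unit_sphere:
  assumes "m > 0"
  obtains v where "sum_sq m v = 1" "\<And>x. sum_sq m x = 1 \<Longrightarrow> quad_form E m v \<le> quad_form E m x"
proof -
  define S where "S = {quad_form E m x | x. sum_sq m x = 1}"
  have "sum_sq m (\<lambda>i. if i = 0 then 1 else 0) = 1"
    unfolding sum_sq_def using assms by (simp add: if_distrib[of "\<lambda>x. x\<^sup>2"] cong: if_cong)
  then have "S \<noteq> {}" unfolding S_def by blast
  have "bdd_below S"
    using quad_form_on_unit_sphere_ge unfolding S_def bdd_below_def by blast
  have "\<exists>x. sum_sq m x = 1 \<and> quad_form E m x < Inf S + inverse (real (Suc k))" for k
    using cInf_lessD[OF \<open>S \<noteq> {}\<close>, of "Inf S + inverse (real (Suc k))"] unfolding S_def by auto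
  then obtain X where X: "\<And>k. sum_sq m (X k) = 1"
    "\<And>k. quad_form E m (X k) < Inf S + inverse (real (Suc k))"
    by metis
  obtain r where r: "strict_mono r" "\<forall>i<m. convergent (\<lambda>k. X (r k) i)"
    using bounded_coordinates_convergent_subseq abs_le_1_if_sum_sq_eq_1[OF X(1)] by metis
  define v where "v i = lim (\<lambda>k. X (r k) i)" for i
  have lim_X: "(\<lambda>k. X (r k) i) \<longlonglongrightarrow> v i" if "i < m" for i
    using r(2) that unfolding v_def by (simp add: convergent_LIMSEQ_iff)
  have "(\<lambda>k. sum_sq m (X (r k))) \<longlonglongrightarrow> sum_sq m v"
    unfolding sum_sq_def by (intro tendsto_intros lim_X) simp
  then have v_unit: "sum_sq m v = 1" using X(1) by (simp add: LIMSEQ_const_iff)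
  have "(\<lambda>k. quad_form E m (X (r k))) \<longlonglongrightarrow> quad_form E m v"
    unfolding quad_form_def by (intro tendsto_sum tendsto_mult tendsto_const lim_X) auto
  moreover have "(\<lambda>k. Inf S + inverse (real (Suc (r k)))) \<longlonglongrightarrow> Inf S + 0"
    using LIMSEQ_subseq_LIMSEQ[OF LIMSEQ_inverse_real_of_nat r(1)]
    by (intro tendsto_intros) (simp add: o_def)
  ultimately have "quad_form E m v \<le> Inf S"
    using X(2) by (intro LIMSEQ_le) (auto intro: less_imp_le)
  moreover have "Inf S \<le> quad_form E m x" if "sum_sq m x = 1" for x
    using \<open>bdd_below S\<close> that unfolding S_def by (auto intro: cInf_lower)
  ultimately show ?thesis using that v_unit by force
qed

lemma is_min_rayleigh_if_min_on_unit_sphere: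
  assumes v: "sum_sq m v = 1" and min: "\<And>x. sum_sq m x = 1 \<Longrightarrow> quad_form E m v \<le> quad_form E m x"
  shows "is_min_rayleigh E m (quad_form E m v)"
  unfolding is_min_rayleigh_def
proof (intro conjI allI exI)
  fix y
  show "quad_form E m v * sum_sq m y \<le> quad_form E m y"
  proof (cases "sum_sq m y = 0")
    case True
    then show ?thesis by (simp add: quad_form_eq_0_if_sum_sq_eq_0)
  next
    case False
    define c where "c = sqrt (sum_sq m y)"
    have "c > 0" "c\<^sup>2 = sum_sq m y"
      using False sum_sq_nonneg[of m y] unfolding c_def by auto
    then have "sum_sq m (\<lambda>i. (1/c) * y i) = 1"
      using False unfolding sum_sq_scale by (simp add: power_divide)
    from min[OF this] have "quad_form E m v \<le> quad_form E m y / c\<^sup>2"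
      unfolding quad_form_scale by (simp add: power_divide)
    with \<open>c\<^sup>2 = sum_sq m y\<close> \<open>c > 0\<close> zero_less_power[of c 2] show ?thesis by (simp add: pos_le_divide_eq)
  qed
qed (use v in auto)

lemma is_min_rayleigh_exists:
  assumes "m > 0"
  shows "\<exists>\<rho>. is_min_rayleigh E m \<rho>"
  using quad_form_attains_min_on_unit_sphere[OF assms] is_min_rayleigh_if_min_on_unit_sphere by metis

lemma linear_coeff_eq_0_if_nonneg:
  fixes a c :: real
  assumes "\<And>t. 0 \<le> 2*t*a + t\<^sup>2*c"
  shows "a = 0"
proof (rule ccontr)
  assume "a \<noteq> 0"
  define t where "t = - a / (\<bar>c\<bar> + 1)"
  have "2*t*a = - 2*a\<^sup>2/(\<bar>c\<bar>+1)" unfolding t_def by (simp add: power2_eq_square)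
  moreover have "t\<^sup>2*c \<le> a\<^sup>2*\<bar>c\<bar>/(\<bar>c\<bar>+1)\<^sup>2"
    unfolding t_def by (simp add: power_divide divide_right_mono mult_left_mono)
  ultimately have "2*t*a + t\<^sup>2*c \<le> - 2*a\<^sup>2/(\<bar>c\<bar>+1) + a\<^sup>2*\<bar>c\<bar>/(\<bar>c\<bar>+1)\<^sup>2" by linarith
  also have "\<dots> \<le> - 2*a\<^sup>2/(\<bar>c\<bar>+1) + a\<^sup>2/(\<bar>c\<bar>+1)"
  proof -
    have "a\<^sup>2*\<bar>c\<bar>/(\<bar>c\<bar>+1)\<^sup>2 = a\<^sup>2/(\<bar>c\<bar>+1) * (\<bar>c\<bar>/(\<bar>c\<bar>+1))"
      by (simp add: power2_eq_square)
    also have "\<dots> \<le> a\<^sup>2/(\<bar>c\<bar>+1)" by (rule mult_left_le) auto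
    finally show ?thesis by simp
  qed
  also have "\<dots> < 0" using \<open>a \<noteq> 0\<close> by (simp add: add_pos_nonneg)
  finally show False using assms[of t] by simp
qed

lemma quad_form_eq_sum_mat_app: "quad_form E m x = (\<Sum>i<m. x i * mat_app E m x i)"
  unfolding quad_form_def mat_app_def by (simp add: sum_distrib_left mult.assoc)

lemma mult_mat_vec_nth_eq_mat_app:
  assumes "E \<in> carrier_mat m m" "i < m"
  shows "(E *\<^sub>v vec m x) $ i = mat_app E m x i"
  using assms unfolding mat_app_def by (simp add: scalar_prod_def atLeast0LessThan)

lemma sum_sq_add_scaled:
  "sum_sq m (\<lambda>i. v i + t * w i) = sum_sq m v + 2*t*(\<Sum>i<m. w i * v i) + t\<^sup>2 * sum_sq m w"
  unfolding sum_sq_def by (simp add: sum.distrib sum_distrib_left power2_eq_square algebra_simps)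

lemma quad_form_add_scaled:
  assumes sym: "\<And>i j. i < m \<Longrightarrow> j < m \<Longrightarrow> E $$ (i,j) = E $$ (j,i)"
  shows "quad_form E m (\<lambda>i. v i + t * w i)
           = quad_form E m v + 2*t*(\<Sum>i<m. w i * mat_app E m v i) + t\<^sup>2 * quad_form E m w"
proof -
  have swap: "(\<Sum>i<m. \<Sum>j<m. v i * E $$ (i,j) * w j) = (\<Sum>i<m. \<Sum>j<m. w i * E $$ (i,j) * v j)"
    by (subst sum.swap) (auto intro!: sum.cong simp: sym)
  have "quad_form E m (\<lambda>i. v i + t * w i) = (\<Sum>i<m. \<Sum>j<m. v i * E $$ (i,j) * v j
      + t * (v i * E $$ (i,j) * w j) + t * (w i * E $$ (i,j) * v j) + t\<^sup>2 * (w i * E $$ (i,j) * w j))"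
    unfolding quad_form_def by (auto intro!: sum.cong simp: algebra_simps power2_eq_square)
  also have "\<dots> = quad_form E m v + t * (\<Sum>i<m. \<Sum>j<m. v i * E $$ (i,j) * w j)
      + t * (\<Sum>i<m. \<Sum>j<m. w i * E $$ (i,j) * v j) + t\<^sup>2 * quad_form E m w"
    unfolding quad_form_def by (simp add: sum.distrib sum_distrib_left)
  finally show ?thesis
    unfolding swap mat_app_def by (simp add: sum_distrib_left mult.assoc)
qed

text \<open>The first variation of the Rayleigh quotient vanishes at a minimiser.\<close>

lemma is_min_rayleigh_eigenvector:
  assumes sym: "\<And>i j. i < m \<Longrightarrow> j < m \<Longrightarrow> E $$ (i,j) = E $$ (j,i)"
    and min: "is_min_rayleigh E m \<rho>" and v: "sum_sq m v = 1" "quad_form E m v = \<rho>"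
    and i: "i < m"
  shows "mat_app E m v i = \<rho> * v i"
proof -
  define w where "w j = (if j = i then 1 else 0 :: real)" for j
  have w_sum: "(\<Sum>j<m. w j * f j) = f i" for f :: "nat \<Rightarrow> real"
  proof -
    have "(\<Sum>j<m. w j * f j) = (\<Sum>j<m. if j = i then f j else 0)"
      by (rule sum.cong) (auto simp: w_def)
    also have "\<dots> = f i" using i by simp
    finally show ?thesis .
  qed
  have "0 \<le> 2*t*(mat_app E m v i - \<rho> * v i) + t\<^sup>2*(quad_form E m w - \<rho> * sum_sq m w)" for t
  proof -
    have "\<rho> * sum_sq m (\<lambda>j. v j + t * w j) \<le> quad_form E m (\<lambda>j. v j + t * w j)"
      using min unfolding is_min_rayleigh_def by blast
    moreover have "quad_form E m (\<lambda>j. v j + t * w j) = \<rho> + 2*t*mat_app E m v i + t\<^sup>2 * quad_form E m w"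
      using quad_form_add_scaled[OF sym, where v=v and t=t and w=w] w_sum v by simp
    moreover have "sum_sq m (\<lambda>j. v j + t * w j) = 1 + 2*t * v i + t\<^sup>2 * sum_sq m w"
      using sum_sq_add_scaled[of m v t w] w_sum v by simp
    ultimately show ?thesis by (simp add: algebra_simps)
  qed
  from linear_coeff_eq_0_if_nonneg[OF this] show ?thesis by simp
qed

lemma is_min_rayleigh_imp_eigenvalue:
  assumes E: "E \<in> carrier_mat m m" and sym: "\<And>i j. i < m \<Longrightarrow> j < m \<Longrightarrow> E $$ (i,j) = E $$ (j,i)"
    and min: "is_min_rayleigh E m \<rho>"
  shows "eigenvalue E \<rho>"
proof -
  obtain v where v: "sum_sq m v = 1" "quad_form E m v = \<rho>"
    using min unfolding is_min_rayleigh_def by blast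
  have "vec m v \<noteq> 0\<^sub>v m"
  proof
    assume "vec m v = 0\<^sub>v m"
    then have "\<forall>i<m. v i = 0" by (metis index_vec index_zero_vec(1))
    with v(1) show False using sum_sq_eq_0_iff[of m v] by simp
  qed
  moreover have "E *\<^sub>v vec m v = \<rho> \<cdot>\<^sub>v vec m v"
  proof (rule eq_vecI)
    fix i assume "i < dim_vec (\<rho> \<cdot>\<^sub>v vec m v)"
    then show "(E *\<^sub>v vec m v) $ i = (\<rho> \<cdot>\<^sub>v vec m v) $ i"
      by (subst mult_mat_vec_nth_eq_mat_app[OF E]) (simp_all add: is_min_rayleigh_eigenvector[OF sym min v])
  qed (use E in simp)
  ultimately show ?thesis
    using E unfolding eigenvalue_def eigenvector_def by (intro exI[of _ "vec m v"]) auto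
qed

lemma is_min_rayleigh_le_eigenvalue:
  assumes E: "E \<in> carrier_mat m m" and min: "is_min_rayleigh E m \<rho>" and l: "eigenvalue E l"
  shows "\<rho> \<le> l"
proof -
  obtain u where u: "u \<in> carrier_vec m" "u \<noteq> 0\<^sub>v m" "E *\<^sub>v u = l \<cdot>\<^sub>v u"
    using l E unfolding eigenvalue_def eigenvector_def by auto
  define x where "x i = u $ i" for i
  have u_eq: "u = vec m x" using u(1) unfolding x_def by auto
  have "mat_app E m x i = l * x i" if "i < m" for i
  proof -
    have "mat_app E m x i = (E *\<^sub>v u) $ i"
      unfolding u_eq by (rule mult_mat_vec_nth_eq_mat_app[OF E that, symmetric])
    also have "\<dots> = l * x i" using u(1,3) that by (simp add: x_def)
    finally show ?thesis .
  qed
  then have "quad_form E m x = l * sum_sq m x"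
    unfolding quad_form_eq_sum_mat_app sum_sq_def
    by (simp add: sum_distrib_left power2_eq_square algebra_simps)
  moreover have "sum_sq m x > 0"
  proof -
    have "sum_sq m x \<noteq> 0"
    proof
      assume "sum_sq m x = 0"
      then have "u = 0\<^sub>v m" using u(1) unfolding sum_sq_eq_0_iff x_def by (intro eq_vecI) auto
      with u(2) show False ..
    qed
    then show ?thesis using sum_sq_nonneg[of m x] by linarith
  qed
  moreover have "\<rho> * sum_sq m x \<le> quad_form E m x" using min unfolding is_min_rayleigh_def by blast
  ultimately show ?thesis by simp
qed

lemma finite_eigenvalues:
  fixes E :: "'a :: field mat"
  assumes "E \<in> carrier_mat m m"
  shows "finite {l. eigenvalue E l}"
proof -
  have "char_poly E \<noteq> 0" using degree_monic_char_poly[OF assms] by auto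
  then show ?thesis using poly_roots_finite eigenvalue_root_char_poly[OF assms] by simp
qed

lemma is_min_rayleigh_lambda_min:
  assumes E: "E \<in> carrier_mat m m" and sym: "\<And>i j. i < m \<Longrightarrow> j < m \<Longrightarrow> E $$ (i,j) = E $$ (j,i)"
    and "m > 0"
  shows "is_min_rayleigh E m (lambda_min E)"
proof -
  obtain \<rho> where min: "is_min_rayleigh E m \<rho>" using is_min_rayleigh_exists[OF \<open>m > 0\<close>] by blast
  have "lambda_min E = \<rho>"
    unfolding lambda_min_def
    using finite_eigenvalues[OF E] is_min_rayleigh_imp_eigenvalue[OF E sym min]
      is_min_rayleigh_le_eigenvalue[OF E min]
    by (intro Min_eqI) auto
  with min show ?thesis by simp
qed

section \<open>Checkerboard matrices\<close>

lemma index_mult_mat_sum: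
  assumes "A \<in> carrier_mat nr n" "B \<in> carrier_mat n nc" "i < nr" "k < nc"
  shows "(A * B) $$ (i,k) = (\<Sum>j<n. A $$ (i,j) * B $$ (j,k))"
  using assms by (simp add: scalar_prod_def atLeast0LessThan)

definition checkerboard :: "'a::zero mat \<Rightarrow> bool" where
  "checkerboard A \<longleftrightarrow> (\<forall>i<dim_row A. \<forall>j<dim_col A. odd (i + j) \<longrightarrow> A $$ (i,j) = 0)"

lemma checkerboardD:
  "checkerboard A \<Longrightarrow> i < dim_row A \<Longrightarrow> j < dim_col A \<Longrightarrow> odd (i + j) \<Longrightarrow> A $$ (i,j) = 0"
  unfolding checkerboard_def by blast

lemma checkerboard_transpose: "checkerboard A \<Longrightarrow> checkerboard (transpose_mat A)"
  unfolding checkerboard_def by (simp add: add.commute)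

lemma checkerboard_mult:
  fixes A B :: "'a::semiring_0 mat"
  assumes A: "checkerboard A" and B: "checkerboard B" and dim: "dim_col A = dim_row B"
  shows "checkerboard (A * B)"
  unfolding checkerboard_def
proof (intro allI impI)
  fix i j assume ij: "i < dim_row (A * B)" "j < dim_col (A * B)" "odd (i + j)"
  have "A $$ (i,k) * B $$ (k,j) = 0" if "k < dim_col A" for k
  proof (cases "odd (i + k)")
    case True
    then show ?thesis using checkerboardD[OF A] ij that by simp
  next
    case False
    then have "odd (k + j)" using ij(3) by presburger
    then show ?thesis using checkerboardD[OF B] ij that dim by simp
  qed
  then show "(A * B) $$ (i,j) = 0"
    using ij dim by (simp add: scalar_prod_def)
qed

text \<open>Conjugation by the sign matrix \<open>diag ((-1)^i)\<close> fixes exactly the checkerboard matrices, so it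
  maps the inverse of a checkerboard matrix to another inverse of the same matrix.\<close>

lemma checkerboard_inverse:
  fixes A B :: "'a::field_char_0 mat"
  assumes A: "A \<in> carrier_mat n n" and B: "B \<in> carrier_mat n n"
    and AB: "A * B = 1\<^sub>m n" and BA: "B * A = 1\<^sub>m n" and chk: "checkerboard A"
  shows "checkerboard B"
proof -
  define B' where "B' = mat n n (\<lambda>(i,j). (-1)^(i+j) * B $$ (i,j))"
  have B': "B' \<in> carrier_mat n n" unfolding B'_def by simp
  have "A * B' = 1\<^sub>m n"
  proof (rule eq_matI)
    fix i k assume "i < dim_row (1\<^sub>m n :: 'a mat)" "k < dim_col (1\<^sub>m n :: 'a mat)"
    then have i: "i < n" and k: "k < n" by auto
    have entry: "A $$ (i,j) * B' $$ (j,k) = (-1)^(i+k) * (A $$ (i,j) * B $$ (j,k))" if j: "j < n" for j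
    proof (cases "odd (i + j)")
      case True
      then show ?thesis using checkerboardD[OF chk] A i j by simp
    next
      case False
      then have "(-1::'a)^(j+k) = (-1)^(i+k)" by (simp add: minus_one_power_iff)
      then show ?thesis using j k unfolding B'_def by simp
    qed
    have "(A * B') $$ (i,k) = (\<Sum>j<n. (-1)^(i+k) * (A $$ (i,j) * B $$ (j,k)))"
      unfolding index_mult_mat_sum[OF A B' i k] using entry by (intro sum.cong) auto
    also have "\<dots> = (-1)^(i+k) * (A * B) $$ (i,k)"
      using index_mult_mat_sum[OF A B i k] by (simp add: sum_distrib_left)
    finally show "(A * B') $$ (i,k) = 1\<^sub>m n $$ (i,k)" using AB i k by simp
  qed (use A B' in auto)
  then have "B = B * (A * B')" using B by simp
  also have "\<dots> = (B * A) * B'" using A B B' by simp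
  also have "\<dots> = B'" using BA B' by simp
  finally have "B = B'" .
  have "B $$ (i,j) = 0" if "i < n" "j < n" "odd (i + j)" for i j
  proof -
    have "B $$ (i,j) = B' $$ (i,j)" using \<open>B = B'\<close> by simp
    also have "\<dots> = - B $$ (i,j)" using that by (simp add: B'_def minus_one_power_iff)
    finally show ?thesis by simp
  qed
  then show ?thesis using B unfolding checkerboard_def by auto
qed

lemma sum_lessThan_parity_split:
  fixes f :: "nat \<Rightarrow> 'a::comm_monoid_add"
  shows "(\<Sum>i<n. f i) = (\<Sum>k<(n+1) div 2. f (2*k)) + (\<Sum>k<n div 2. f (2*k+1))"
proof (induction n)
  case (Suc n)
  show ?case
  proof (cases "even n")
    case True
    then have "(Suc n + 1) div 2 = Suc ((n+1) div 2)" "Suc n div 2 = n div 2" "2 * ((n+1) div 2) = n"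
      by presburger+
    then show ?thesis using Suc.IH by (simp add: ac_simps)
  next
    case False
    then have "(Suc n + 1) div 2 = (n+1) div 2" "Suc n div 2 = Suc (n div 2)" "2 * (n div 2) + 1 = n"
      by presburger+
    then show ?thesis using Suc.IH by (simp add: ac_simps)
  qed
qed simp

lemma sum_sq_parity_split:
  "sum_sq n z = sum_sq ((n+1) div 2) (\<lambda>k. z (2*k)) + sum_sq (n div 2) (\<lambda>k. z (2*k+1))"
  unfolding sum_sq_def by (rule sum_lessThan_parity_split)

lemma quad_form_checkerboard_split:
  assumes C: "C \<in> carrier_mat n n" and chk: "checkerboard C"
  shows "quad_form C n z = quad_form (E_odd C ((n+1) div 2)) ((n+1) div 2) (\<lambda>k. z (2*k))
                         + quad_form (E_even C (n div 2)) (n div 2) (\<lambda>k. z (2*k+1))"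
proof -
  define mo where "mo = (n+1) div 2"
  define me where "me = n div 2"
  have mo: "k < mo \<Longrightarrow> 2*k < n" and me: "k < me \<Longrightarrow> 2*k+1 < n" for k
    unfolding mo_def me_def by presburger+
  define g where "g i j = z i * C $$ (i,j) * z j" for i j
  have cross: "g (2*k) (2*l+1) = 0" "g (2*l+1) (2*k) = 0" if "k < mo" "l < me" for k l
    using checkerboardD[OF chk] C mo[OF that(1)] me[OF that(2)] unfolding g_def by auto
  have "quad_form C n z = (\<Sum>i<n. (\<Sum>l<mo. g i (2*l)) + (\<Sum>l<me. g i (2*l+1)))"
    unfolding quad_form_def g_def[symmetric] mo_def me_def
    by (rule sum.cong[OF refl]) (rule sum_lessThan_parity_split)
  also have "\<dots> = (\<Sum>k<mo. (\<Sum>l<mo. g (2*k) (2*l)) + (\<Sum>l<me. g (2*k) (2*l+1)))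
                 + (\<Sum>k<me. (\<Sum>l<mo. g (2*k+1) (2*l)) + (\<Sum>l<me. g (2*k+1) (2*l+1)))"
    unfolding mo_def me_def by (rule sum_lessThan_parity_split)
  also have "\<dots> = (\<Sum>k<mo. \<Sum>l<mo. g (2*k) (2*l)) + (\<Sum>k<me. \<Sum>l<me. g (2*k+1) (2*l+1))"
    using cross by (simp add: sum.distrib)
  also have "\<dots> = quad_form (E_odd C mo) mo (\<lambda>k. z (2*k)) + quad_form (E_even C me) me (\<lambda>k. z (2*k+1))"
    unfolding quad_form_def E_odd_def E_even_def g_def by simp
  finally show ?thesis unfolding mo_def me_def .
qed

definition interleave :: "(nat \<Rightarrow> real) \<Rightarrow> (nat \<Rightarrow> real) \<Rightarrow> nat \<Rightarrow> real" where
  "interleave x y i = (if even i then x (i div 2) else y (i div 2))"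

lemma interleave_even [simp]: "(\<lambda>k. interleave x y (2*k)) = x"
  and interleave_odd [simp]: "(\<lambda>k. interleave x y (Suc (2*k))) = y"
  unfolding interleave_def by auto

lemma sum_sq_zero_fun [simp]: "sum_sq m (\<lambda>_. 0) = 0"
  and quad_form_zero_fun [simp]: "quad_form E m (\<lambda>_. 0) = 0"
  unfolding sum_sq_def quad_form_def by simp_all

lemma is_min_rayleigh_block_diag:
  assumes qf: "\<And>z. quad_form C n z = quad_form E1 m1 (\<lambda>k. z (2*k)) + quad_form E2 m2 (\<lambda>k. z (2*k+1))"
    and ss: "\<And>z. sum_sq n z = sum_sq m1 (\<lambda>k. z (2*k)) + sum_sq m2 (\<lambda>k. z (2*k+1))"
    and min1: "is_min_rayleigh E1 m1 \<rho>1" and min2: "is_min_rayleigh E2 m2 \<rho>2"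
  shows "is_min_rayleigh C n (min \<rho>1 \<rho>2)"
  unfolding is_min_rayleigh_def
proof (intro conjI allI)
  fix z
  have "min \<rho>1 \<rho>2 * sum_sq m1 (\<lambda>k. z (2*k)) \<le> \<rho>1 * sum_sq m1 (\<lambda>k. z (2*k))"
    "min \<rho>1 \<rho>2 * sum_sq m2 (\<lambda>k. z (2*k+1)) \<le> \<rho>2 * sum_sq m2 (\<lambda>k. z (2*k+1))"
    using sum_sq_nonneg by (auto intro: mult_right_mono)
  then show "min \<rho>1 \<rho>2 * sum_sq n z \<le> quad_form C n z"
    using min1 min2 unfolding qf ss is_min_rayleigh_def distrib_left by (smt (verit))
next
  obtain x1 x2 where x1: "sum_sq m1 x1 = 1" "quad_form E1 m1 x1 = \<rho>1"
    and x2: "sum_sq m2 x2 = 1" "quad_form E2 m2 x2 = \<rho>2"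
    using min1 min2 unfolding is_min_rayleigh_def by blast
  show "\<exists>z. sum_sq n z = 1 \<and> quad_form C n z = min \<rho>1 \<rho>2"
  proof (cases "\<rho>1 \<le> \<rho>2")
    case True
    then show ?thesis using x1 by (intro exI[of _ "interleave x1 (\<lambda>_. 0)"]) (simp add: qf ss)
  next
    case False
    then show ?thesis using x2 by (intro exI[of _ "interleave (\<lambda>_. 0) x2"]) (simp add: qf ss)
  qed
qed

lemma is_min_rayleigh_transfer:
  assumes qf: "\<And>z. quad_form C n z = quad_form E m (f z)" and ss: "\<And>z. sum_sq n z = sum_sq m (f z)"
    and surj: "\<And>x. \<exists>z. f z = x" and min: "is_min_rayleigh E m \<rho>"
  shows "is_min_rayleigh C n \<rho>"
  using min surj unfolding is_min_rayleigh_def qf ss by metis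

lemma is_min_rayleigh_checkerboard:
  assumes C: "C \<in> carrier_mat n n" and chk: "checkerboard C"
    and sym: "\<And>i j. i < n \<Longrightarrow> j < n \<Longrightarrow> C $$ (i,j) = C $$ (j,i)" and "n \<ge> 1"
  shows "is_min_rayleigh C n
           (if n div 2 = 0 then lambda_min (E_odd C ((n+1) div 2))
            else min (lambda_min (E_odd C ((n+1) div 2))) (lambda_min (E_even C (n div 2))))"
proof -
  define mo where "mo = (n+1) div 2"
  define me where "me = n div 2"
  have mo: "k < mo \<Longrightarrow> 2*k < n" and me: "k < me \<Longrightarrow> Suc (2*k) < n" for k
    unfolding mo_def me_def by presburger+
  have qf: "quad_form C n z = quad_form (E_odd C mo) mo (\<lambda>k. z (2*k))
                            + quad_form (E_even C me) me (\<lambda>k. z (2*k+1))" for z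
    unfolding mo_def me_def by (rule quad_form_checkerboard_split[OF C chk])
  have ss: "sum_sq n z = sum_sq mo (\<lambda>k. z (2*k)) + sum_sq me (\<lambda>k. z (2*k+1))" for z
    unfolding mo_def me_def by (rule sum_sq_parity_split)
  have min_odd: "is_min_rayleigh (E_odd C mo) mo (lambda_min (E_odd C mo))"
    using \<open>n \<ge> 1\<close> by (intro is_min_rayleigh_lambda_min) (auto simp: E_odd_def mo_def sym mo)
  show ?thesis
  proof (cases "me = 0")
    case True
    have "is_min_rayleigh C n (lambda_min (E_odd C mo))"
      using qf ss True by (intro is_min_rayleigh_transfer[OF _ _ _ min_odd, of _ _ "\<lambda>z k. z (2*k)"])
        (auto simp: quad_form_def sum_sq_def intro: exI[of _ "interleave _ (\<lambda>_. 0)"])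
    with True show ?thesis unfolding mo_def me_def by simp
  next
    case False
    have "is_min_rayleigh (E_even C me) me (lambda_min (E_even C me))"
      using False by (intro is_min_rayleigh_lambda_min) (auto simp: E_even_def intro!: sym me)
    from is_min_rayleigh_block_diag[OF qf ss min_odd this] False show ?thesis
      unfolding mo_def me_def by simp
  qed
qed

section \<open>Orthonormal polynomials for the Gegenbauer weight\<close>

lemma gweight_nonneg: "0 \<le> gweight \<alpha> t"
  unfolding gweight_def by simp

lemma gweight_uminus: "gweight \<alpha> (-t) = gweight \<alpha> t"
  unfolding gweight_def by simp

lemma borel_measurable_gweight: "gweight \<alpha> \<in> borel_measurable lborel"
  unfolding gweight_def by measurable

lemma borel_measurable_poly: "(\<lambda>t. poly q t) \<in> borel_measurable (lborel :: real measure)"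
proof -
  have "(\<lambda>t. poly q t) \<in> borel_measurable (borel :: real measure)"
    by (rule borel_measurable_continuous_onI) (intro continuous_intros)
  then show ?thesis by simp
qed

lemma poly_bounded_on_interval: "\<exists>B. \<forall>t\<in>{-1..1::real}. \<bar>poly q t\<bar> \<le> B"
proof -
  have "compact (poly q ` {-1..1::real})"
    by (intro compact_continuous_image continuous_intros) auto
  then have "bounded (poly q ` {-1..1::real})" by (rule compact_imp_bounded)
  then obtain B where "\<forall>y\<in>poly q ` {-1..1::real}. norm y \<le> B"
    unfolding bounded_iff by blast
  then show ?thesis by auto
qed

locale orthonormal_poly_system =
  fixes \<alpha> :: real and p :: "nat \<Rightarrow> real poly"
  assumes orthonormal: "orthonormal_polys \<alpha> p"
begin

lemma degree_p: "degree (p k) = k"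
  and lead_coeff_p_pos: "lead_coeff (p k) > 0"
  and wip_p_p: "wip \<alpha> (poly (p j)) (poly (p k)) = (if j = k then 1 else 0)"
  using orthonormal unfolding orthonormal_polys_def by blast+

text \<open>Integrability of the weight follows from the normalisation of \<open>p 0\<close>.\<close>

lemma set_integrable_gweight: "set_integrable lborel {-1<..<1} (gweight \<alpha>)"
proof -
  define c where "c = coeff (p 0) 0"
  have "c \<noteq> 0" using lead_coeff_p_pos[of 0] degree_p[of 0] unfolding c_def by simp
  have "poly (p 0) t = c" for t
    using degree_p[of 0] unfolding c_def by (metis degree_0_id poly_const_conv)
  then have "(LINT t:{-1<..<1}|lborel. c\<^sup>2 * gweight \<alpha> t) = 1"
    using wip_p_p[of 0 0] unfolding wip_def by (simp add: power2_eq_square mult.assoc)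
  then have "set_integrable lborel {-1<..<1} (\<lambda>t. c\<^sup>2 * gweight \<alpha> t)"
    using not_integrable_integral_eq unfolding set_integrable_def set_lebesgue_integral_def by force
  with \<open>c \<noteq> 0\<close> show ?thesis by simp
qed

lemma set_integrable_poly_gweight: "set_integrable lborel {-1<..<1} (\<lambda>t. poly q t * gweight \<alpha> t)"
proof -
  obtain B where B: "\<forall>t\<in>{-1..1::real}. \<bar>poly q t\<bar> \<le> B" using poly_bounded_on_interval by blast
  have bound: "norm (poly q t * gweight \<alpha> t) \<le> norm (B * gweight \<alpha> t)" if "t \<in> {-1<..<1}" for t
  proof -
    have "t \<in> {-1..1}" using that by simp
    with B have "\<bar>poly q t\<bar> \<le> B" by blast
    then have "\<bar>poly q t\<bar> * gweight \<alpha> t \<le> \<bar>B\<bar> * gweight \<alpha> t"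
      by (intro mult_right_mono gweight_nonneg) linarith
    then show ?thesis using gweight_nonneg[of \<alpha> t] by (simp add: abs_mult)
  qed
  have "set_borel_measurable lborel {-1<..<1} (\<lambda>t. poly q t * gweight \<alpha> t)"
    unfolding set_borel_measurable_def using borel_measurable_gweight borel_measurable_poly by measurable
  then show ?thesis
  proof (rule set_integrable_bound[rotated])
    show "set_integrable lborel {-1<..<1} (\<lambda>t. B * gweight \<alpha> t)"
      using set_integrable_gweight by simp
    show "AE t in lborel. t \<in> {-1<..<1} \<longrightarrow> norm (poly q t * gweight \<alpha> t) \<le> norm (B * gweight \<alpha> t)"
      using bound by (intro AE_I2) blast
  qed
qed

definition ip :: "real poly \<Rightarrow> real poly \<Rightarrow> real" where
  "ip q r = wip \<alpha> (poly q) (poly r)"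

lemma ip_eq_integral: "ip q r = (LINT t:{-1<..<1}|lborel. poly (q * r) t * gweight \<alpha> t)"
  unfolding ip_def wip_def by simp

lemma ip_commute: "ip q r = ip r q"
  unfolding ip_eq_integral by (simp add: mult.commute)

lemma ip_add_left: "ip (q1 + q2) r = ip q1 r + ip q2 r"
  unfolding ip_eq_integral distrib_right poly_add
  by (rule set_integral_add(2)[OF set_integrable_poly_gweight set_integrable_poly_gweight])

lemma ip_smult_left: "ip (Polynomial.smult c q) r = c * ip q r"
  unfolding ip_eq_integral by (simp add: mult.assoc)

lemma ip_zero_left [simp]: "ip 0 r = 0"
  unfolding ip_eq_integral by simp

lemma ip_sum_left: "ip (\<Sum>a\<in>A. f a) r = (\<Sum>a\<in>A. ip (f a) r)"
  by (induction A rule: infinite_finite_induct) (simp_all add: ip_add_left)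

lemma ip_p_p: "ip (p j) (p k) = (if j = k then 1 else 0)"
  unfolding ip_def by (rule wip_p_p)

lemma ip_sum_smult_p: "j \<le> d \<Longrightarrow> ip (\<Sum>k\<le>d. Polynomial.smult (b k) (p k)) (p j) = b j"
  by (simp add: ip_sum_left ip_smult_left ip_p_p if_distrib[of "(*) _"] cong: if_cong)

lemma degree_sum_smult_p_le: "degree (\<Sum>k\<le>d. Polynomial.smult (b k) (p k)) \<le> d"
  by (rule degree_sum_le) (auto intro: order.trans[OF degree_smult_le] simp: degree_p)

lemma degree_sub_smult_p_less:
  assumes "degree q \<le> k"
  shows "q - Polynomial.smult (coeff q k / lead_coeff (p k)) (p k) = 0
       \<or> degree (q - Polynomial.smult (coeff q k / lead_coeff (p k)) (p k)) < k"
proof -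
  define r where "r = q - Polynomial.smult (coeff q k / lead_coeff (p k)) (p k)"
  have "coeff r k = 0"
    unfolding r_def using lead_coeff_p_pos[of k] degree_p[of k] by simp
  moreover have "degree r \<le> k"
    unfolding r_def using assms degree_p[of k]
    by (intro degree_diff_le) (auto intro: order.trans[OF degree_smult_le])
  ultimately show ?thesis unfolding r_def[symmetric] by (cases "degree r = k") auto
qed

lemma exists_p_expansion: "degree q \<le> d \<Longrightarrow> \<exists>b. q = (\<Sum>k\<le>d. Polynomial.smult (b k) (p k))"
proof (induction d arbitrary: q)
  case 0
  then have "q = Polynomial.smult (coeff q 0 / lead_coeff (p 0)) (p 0)"
    using degree_sub_smult_p_less[OF 0] by simp
  then show ?case by (intro exI[of _ "\<lambda>_. coeff q 0 / lead_coeff (p 0)"]) simp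
next
  case (Suc d)
  define c where "c = coeff q (Suc d) / lead_coeff (p (Suc d))"
  define r where "r = q - Polynomial.smult c (p (Suc d))"
  have "degree r \<le> d"
    using degree_sub_smult_p_less[OF Suc.prems] unfolding r_def c_def by auto
  then obtain b where b: "r = (\<Sum>k\<le>d. Polynomial.smult (b k) (p k))" using Suc.IH by blast
  have "q = r + Polynomial.smult c (p (Suc d))" unfolding r_def by simp
  also have "\<dots> = (\<Sum>k\<le>Suc d. Polynomial.smult ((b(Suc d := c)) k) (p k))"
    unfolding b by (simp add: sum.atMost_Suc)
  finally show ?case by blast
qed

lemma p_expansion: "degree q \<le> d \<Longrightarrow> q = (\<Sum>k\<le>d. Polynomial.smult (ip q (p k)) (p k))"
proof -
  assume "degree q \<le> d"
  then obtain b where b: "q = (\<Sum>k\<le>d. Polynomial.smult (b k) (p k))" using exists_p_expansion by blast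
  then have "ip q (p k) = b k" if "k \<le> d" for k using that by (simp add: ip_sum_smult_p)
  then show ?thesis by (subst (1) b) simp
qed

lemma parseval: "degree q \<le> d \<Longrightarrow> ip q q = (\<Sum>k\<le>d. (ip q (p k))\<^sup>2)"
proof -
  assume "degree q \<le> d"
  then have "ip q q = ip (\<Sum>k\<le>d. Polynomial.smult (ip q (p k)) (p k)) q"
    by (metis p_expansion)
  also have "\<dots> = (\<Sum>k\<le>d. (ip q (p k))\<^sup>2)"
    by (simp add: ip_sum_left ip_smult_left ip_commute[of "p _"] power2_eq_square)
  finally show ?thesis .
qed

lemma ip_p_eq_0_if_degree_less: "degree q < k \<Longrightarrow> ip q (p k) = 0"
proof -
  assume "degree q < k"
  have "ip q (p k) = ip (\<Sum>j\<le>degree q. Polynomial.smult (ip q (p j)) (p j)) (p k)"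
    by (metis order.refl p_expansion)
  also have "\<dots> = 0"
    using \<open>degree q < k\<close> by (simp add: ip_sum_left ip_smult_left ip_p_p)
  finally show ?thesis .
qed

lemma ip_p_degree_eq:
  assumes "degree q = k"
  shows "ip q (p k) = lead_coeff q / lead_coeff (p k)"
proof -
  define c where "c = lead_coeff q / lead_coeff (p k)"
  define r where "r = q - Polynomial.smult c (p k)"
  have "ip r (p k) = 0"
    using degree_sub_smult_p_less[of q k] assms ip_p_eq_0_if_degree_less unfolding r_def c_def by auto
  have "ip q (p k) = ip (r + Polynomial.smult c (p k)) (p k)" unfolding r_def by simp
  also have "\<dots> = c" using \<open>ip r (p k) = 0\<close> by (simp add: ip_add_left ip_smult_left ip_p_p)
  finally show ?thesis unfolding c_def .
qed

lemma ip_self_pos: "q \<noteq> 0 \<Longrightarrow> ip q q > 0"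
proof -
  assume "q \<noteq> 0"
  have "\<exists>k\<le>degree q. ip q (p k) \<noteq> 0"
  proof (rule ccontr)
    assume "\<not> ?thesis"
    then have "(\<Sum>k\<le>degree q. Polynomial.smult (ip q (p k)) (p k)) = 0" by simp
    then have "q = 0" by (metis order.refl p_expansion)
    with \<open>q \<noteq> 0\<close> show False ..
  qed
  then obtain k where "k \<le> degree q" "ip q (p k) \<noteq> 0" by blast
  then have "(\<Sum>j\<le>degree q. (ip q (p j))\<^sup>2) > 0" by (intro sum_pos2[of _ k]) auto
  then show ?thesis using parseval[of q "degree q"] by simp
qed

lemma ip_self_nonneg: "ip q q \<ge> 0"
  using ip_self_pos[of q] by (cases "q = 0") auto

end

lemma set_integral_reflect:
  fixes f :: "real \<Rightarrow> real"
  shows "(LINT t:{-1<..<1}|lborel. f (-t)) = (LINT t:{-1<..<1}|lborel. f t)"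
proof -
  have "(LINT t:{-1<..<1}|lborel. f t) = integral\<^sup>L lborel (\<lambda>t. indicator {-1<..<1} t *\<^sub>R f t)"
    by (simp add: set_lebesgue_integral_def)
  also have "\<dots> = \<bar>-1::real\<bar> *\<^sub>R integral\<^sup>L lborel (\<lambda>x. indicator {-1<..<1} (0 + -1*x) *\<^sub>R f (0 + -1*x))"
    by (rule lborel_integral_real_affine) simp
  also have "\<dots> = integral\<^sup>L lborel (\<lambda>x. indicator {-1<..<1} x *\<^sub>R f (-x))"
    by (auto intro!: Bochner_Integration.integral_cong simp: indicator_def)
  finally show ?thesis by (simp add: set_lebesgue_integral_def)
qed

lemma set_integral_odd_eq_0:
  fixes f :: "real \<Rightarrow> real"
  assumes "\<And>t. f (-t) = - f t"
  shows "(LINT t:{-1<..<1}|lborel. f t) = 0"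
proof -
  have "(LINT t:{-1<..<1}|lborel. f t) = (LINT t:{-1<..<1}|lborel. - f t)"
    using set_integral_reflect[of f] by (simp add: assms)
  also have "\<dots> = - (LINT t:{-1<..<1}|lborel. f t)"
    by (simp add: set_lebesgue_integral_def)
  finally show ?thesis by simp
qed

lemma poly_pderiv_uminus_if_parity:
  fixes f :: "real poly"
  assumes "\<And>t. poly f (-t) = c * poly f t"
  shows "poly (pderiv f) (-t) = - c * poly (pderiv f) t"
proof -
  have "f \<circ>\<^sub>p [:0, -1:] = Polynomial.smult c f"
    by (rule poly_ext) (simp add: poly_pcompose assms)
  then have "pderiv (f \<circ>\<^sub>p [:0, -1:]) = Polynomial.smult c (pderiv f)"
    by (simp add: pderiv_smult)
  moreover have "poly (pderiv (f \<circ>\<^sub>p [:0, -1:])) t = - poly (pderiv f) (-t)"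
    by (simp add: pderiv_pcompose pderiv_pCons poly_pcompose)
  ultimately show ?thesis by simp
qed

context orthonormal_poly_system
begin

lemma orthonormal_polys_unique:
  assumes r: "orthonormal_polys \<alpha> r"
  shows "r k = p k"
proof (induction k rule: less_induct)
  case (less k)
  have r_k: "degree (r k) = k" "lead_coeff (r k) > 0"
    using r unfolding orthonormal_polys_def by blast+
  have r_ip: "ip (r j) (r k) = (if j = k then 1 else 0)" for j
    using r unfolding orthonormal_polys_def ip_def by blast
  have "ip (r k) (p j) = 0" if "j < k" for j
    using less.IH[OF that] r_ip[of j] that by (simp add: ip_commute)
  then have "r k = (\<Sum>j\<le>k. Polynomial.smult (ip (r k) (p j)) (p j))"
    using p_expansion[of "r k" k] r_k(1) by simp
  also have "\<dots> = Polynomial.smult (ip (r k) (p k)) (p k)"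
    using \<open>\<And>j. j < k \<Longrightarrow> ip (r k) (p j) = 0\<close> by (subst sum.remove[of _ k]) (auto intro!: sum.neutral)
  finally have rk: "r k = Polynomial.smult (ip (r k) (p k)) (p k)" .
  define c where "c = ip (r k) (p k)"
  have rk_c: "r k = Polynomial.smult c (p k)" unfolding c_def by (rule rk)
  have "lead_coeff (r k) = c * lead_coeff (p k)" unfolding rk_c by simp
  then have "c > 0" using r_k(2) lead_coeff_p_pos[of k] by (simp add: zero_less_mult_iff)
  moreover have "c\<^sup>2 = 1"
  proof -
    have "1 = ip (Polynomial.smult c (p k)) (Polynomial.smult c (p k))" using r_ip[of k] rk_c by simp
    also have "\<dots> = c\<^sup>2" by (simp add: ip_smult_left ip_commute[of "p k"] ip_p_p power2_eq_square)
    finally show ?thesis by simp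
  qed
  ultimately have "c = 1" by (simp add: power2_eq_1_iff)
  then show ?case using rk_c by simp
qed

lemma orthonormal_polys_reflect:
  "orthonormal_polys \<alpha> (\<lambda>k. Polynomial.smult ((-1)^k) (p k \<circ>\<^sub>p [:0, -1:]))"
  unfolding orthonormal_polys_def
proof (intro conjI allI)
  fix k
  show "degree (Polynomial.smult ((-1)^k) (p k \<circ>\<^sub>p [:0, -1:])) = k"
    by (simp add: degree_pcompose degree_p)
  have "lead_coeff (p k \<circ>\<^sub>p [:0, -1:]) = (-1)^k * lead_coeff (p k)"
    using lead_coeff_comp[of "[:0, -1:]" "p k"] degree_p[of k] by simp
  then show "lead_coeff (Polynomial.smult ((-1)^k) (p k \<circ>\<^sub>p [:0, -1:])) > 0"
    using lead_coeff_p_pos[of k] by (simp add: mult.assoc[symmetric])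
next
  fix j k
  define f where "f t = poly (p j) t * poly (p k) t * gweight \<alpha> t" for t
  have "wip \<alpha> (poly (Polynomial.smult ((-1)^j) (p j \<circ>\<^sub>p [:0, -1:])))
              (poly (Polynomial.smult ((-1)^k) (p k \<circ>\<^sub>p [:0, -1:])))
      = (LINT t:{-1<..<1}|lborel. (-1)^(j+k) * f (-t))"
    unfolding wip_def f_def by (simp add: poly_pcompose gweight_uminus power_add mult_ac)
  also have "\<dots> = (-1)^(j+k) * wip \<alpha> (poly (p j)) (poly (p k))"
    by (simp only: set_integral_mult_right set_integral_reflect) (simp add: wip_def f_def)
  finally show "wip \<alpha> (poly (Polynomial.smult ((-1)^j) (p j \<circ>\<^sub>p [:0, -1:])))
      (poly (Polynomial.smult ((-1)^k) (p k \<circ>\<^sub>p [:0, -1:]))) = (if j = k then 1 else 0)"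
    by (simp add: wip_p_p)
qed

lemma poly_p_uminus: "poly (p k) (-t) = (-1)^k * poly (p k) t"
proof -
  have "p k = Polynomial.smult ((-1)^k) (p k \<circ>\<^sub>p [:0, -1:])"
    using orthonormal_polys_unique[OF orthonormal_polys_reflect, of k] by simp
  then have "poly (p k) t = poly (Polynomial.smult ((-1)^k) (p k \<circ>\<^sub>p [:0, -1:])) t"
    by (rule arg_cong)
  then have "poly (p k) t = (-1)^k * poly (p k) (-t)" by (simp add: poly_pcompose)
  then show ?thesis by (simp add: mult.assoc[symmetric])
qed

lemma poly_pderiv_p_uminus: "poly (pderiv (p k)) (-t) = (-1)^Suc k * poly (pderiv (p k)) t"
  using poly_pderiv_uminus_if_parity[OF poly_p_uminus] by simp

lemma ip_pderiv_p_p_eq_0_if_odd: "odd (i + j) \<Longrightarrow> ip (pderiv (p (Suc j))) (p i) = 0"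
  unfolding ip_def wip_def
  by (rule set_integral_odd_eq_0)
     (simp add: poly_pderiv_p_uminus poly_p_uminus gweight_uminus power_add[symmetric] minus_one_power_iff)

end

section \<open>The matrices \<open>A\<^sub>n\<^sub>,\<^sub>1\<close> and \<open>C\<^sub>n\<close>\<close>

lemma mat_inverse_SomeE:
  fixes A :: "'a::field mat"
  assumes A: "A \<in> carrier_mat n n" and "det A \<noteq> 0"
  obtains B where "mat_inverse A = Some B" "A * B = 1\<^sub>m n" "B * A = 1\<^sub>m n" "B \<in> carrier_mat n n"
proof (cases "mat_inverse A")
  case None
  then show ?thesis using mat_inverse(1)[OF A None, of "()"] det_non_zero_imp_unit[OF A \<open>det A \<noteq> 0\<close>, of "()"] by blast
next
  case (Some B)
  then show ?thesis using mat_inverse(2)[OF A Some] that by blast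
qed

lemma mat_inverse_transpose_mult:
  fixes A :: "'a::field mat"
  assumes A: "A \<in> carrier_mat n n" and "det A \<noteq> 0"
  obtains B where "B \<in> carrier_mat n n" "A * B = 1\<^sub>m n" "B * A = 1\<^sub>m n"
    "the (mat_inverse (transpose_mat A)) * the (mat_inverse A) = transpose_mat B * B"
proof -
  obtain B where B: "mat_inverse A = Some B" "A * B = 1\<^sub>m n" "B * A = 1\<^sub>m n" "B \<in> carrier_mat n n"
    using mat_inverse_SomeE[OF assms] by blast
  have At: "transpose_mat A \<in> carrier_mat n n" using A by simp
  have "det (transpose_mat A) \<noteq> 0" using \<open>det A \<noteq> 0\<close> det_transpose[OF A] by simp
  then obtain B' where B': "mat_inverse (transpose_mat A) = Some B'" "transpose_mat A * B' = 1\<^sub>m n"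
    "B' \<in> carrier_mat n n"
    using mat_inverse_SomeE[OF At] by blast
  have "transpose_mat B = transpose_mat B * (transpose_mat A * B')" using B'(2) B(4) by simp
  also have "\<dots> = (transpose_mat B * transpose_mat A) * B'"
    using A B(4) B'(3) by simp
  also have "\<dots> = transpose_mat (A * B) * B'"
    using A B(4) by (simp add: transpose_mult)
  also have "\<dots> = B'" using B(2) B'(3) by simp
  finally show ?thesis using that B B' by simp
qed

lemma mat_app_mult_inverse:
  assumes "P \<in> carrier_mat n n" "Q \<in> carrier_mat n n" "P * Q = 1\<^sub>m n" "i < n"
  shows "mat_app P n (mat_app Q n z) i = z i"
proof -
  have "mat_app P n (mat_app Q n z) i = (\<Sum>j<n. \<Sum>k<n. P $$ (i,j) * Q $$ (j,k) * z k)"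
    unfolding mat_app_def by (simp add: sum_distrib_left mult.assoc)
  also have "\<dots> = (\<Sum>k<n. \<Sum>j<n. P $$ (i,j) * Q $$ (j,k) * z k)" by (rule sum.swap)
  also have "\<dots> = (\<Sum>k<n. (P * Q) $$ (i,k) * z k)"
    using assms(1,2,4) by (intro sum.cong refl) (simp add: scalar_prod_def atLeast0LessThan sum_distrib_right)
  also have "\<dots> = (\<Sum>k<n. if k = i then z k else 0)"
    using assms by (intro sum.cong) auto
  also have "\<dots> = z i" using assms by simp
  finally show ?thesis .
qed

lemma quad_form_transpose_mult:
  assumes "B \<in> carrier_mat n n"
  shows "quad_form (transpose_mat B * B) n z = sum_sq n (mat_app B n z)"
proof -
  have "sum_sq n (mat_app B n z) = (\<Sum>j<n. \<Sum>k<n. \<Sum>l<n. (B $$ (j,k) * z k) * (B $$ (j,l) * z l))"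
    unfolding sum_sq_def mat_app_def by (simp add: power2_eq_square sum_product)
  also have "\<dots> = (\<Sum>k<n. \<Sum>j<n. \<Sum>l<n. (B $$ (j,k) * z k) * (B $$ (j,l) * z l))"
    by (rule sum.swap)
  also have "\<dots> = (\<Sum>k<n. \<Sum>l<n. \<Sum>j<n. (B $$ (j,k) * z k) * (B $$ (j,l) * z l))"
    by (rule sum.cong[OF refl], rule sum.swap)
  also have "\<dots> = quad_form (transpose_mat B * B) n z"
    unfolding quad_form_def
  proof (intro sum.cong refl)
    fix k l assume "k \<in> {..<n}" "l \<in> {..<n}"
    then have "(transpose_mat B * B) $$ (k,l) = (\<Sum>j<n. B $$ (j,k) * B $$ (j,l))"
      using index_mult_mat_sum[of "transpose_mat B" n n B n k l] assms by simp
    then show "(\<Sum>j<n. (B $$ (j,k) * z k) * (B $$ (j,l) * z l)) = z k * (transpose_mat B * B) $$ (k,l) * z l"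
      by (simp add: sum_distrib_left sum_distrib_right algebra_simps)
  qed
  finally show ?thesis ..
qed

context orthonormal_poly_system
begin

lemma A_mat_carrier: "A_mat \<alpha> p n \<in> carrier_mat n n"
  by (simp add: A_mat_def)

lemma A_mat_index: "i < n \<Longrightarrow> j < n \<Longrightarrow> A_mat \<alpha> p n $$ (i,j) = ip (pderiv (p (Suc j))) (p i)"
  by (simp add: A_mat_def ip_def)

lemma degree_pderiv_p: "degree (pderiv (p (Suc j))) = j"
  by (simp add: degree_pderiv degree_p)

lemma upper_triangular_A_mat: "upper_triangular (A_mat \<alpha> p n)"
  using A_mat_carrier[of n]
  by (intro upper_triangularI) (simp add: A_mat_index degree_pderiv_p ip_p_eq_0_if_degree_less)

lemma det_A_mat_neq_0: "det (A_mat \<alpha> p n) \<noteq> 0"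
proof -
  have "A_mat \<alpha> p n $$ (i,i) \<noteq> 0" if "i < n" for i
  proof -
    have "pderiv (p (Suc i)) \<noteq> 0" using degree_p[of "Suc i"] by (auto simp: pderiv_eq_0_iff)
    then have "lead_coeff (pderiv (p (Suc i))) \<noteq> 0" by simp
    moreover have "ip (pderiv (p (Suc i))) (p i) = lead_coeff (pderiv (p (Suc i))) / lead_coeff (p i)"
      by (rule ip_p_degree_eq[OF degree_pderiv_p])
    moreover have "p i \<noteq> 0" using lead_coeff_p_pos[of i] by auto
    ultimately show ?thesis
      using that lead_coeff_p_pos[of i] by (simp add: A_mat_index)
  qed
  then show ?thesis
    using upper_triangular_imp_det_eq_0_iff[OF A_mat_carrier upper_triangular_A_mat] A_mat_carrier[of n]
    by (auto simp: diag_mat_def)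
qed

lemma checkerboard_A_mat: "checkerboard (A_mat \<alpha> p n)"
  unfolding checkerboard_def using A_mat_carrier[of n]
  by (auto simp: A_mat_index add.commute[of _ "Suc _"] ip_pderiv_p_p_eq_0_if_odd)

lemma C_mat_factorization:
  obtains B where "B \<in> carrier_mat n n" "A_mat \<alpha> p n * B = 1\<^sub>m n" "B * A_mat \<alpha> p n = 1\<^sub>m n"
    "C_mat \<alpha> p n = transpose_mat B * B"
  using mat_inverse_transpose_mult[OF A_mat_carrier det_A_mat_neq_0] unfolding C_mat_def by metis

lemma C_mat_carrier: "C_mat \<alpha> p n \<in> carrier_mat n n"
  by (metis C_mat_factorization carrier_matD(2) mult_carrier_mat transpose_carrier_mat)

lemma C_mat_symmetric:
  assumes "i < n" "j < n"
  shows "C_mat \<alpha> p n $$ (i,j) = C_mat \<alpha> p n $$ (j,i)"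
proof -
  obtain B where "B \<in> carrier_mat n n" "C_mat \<alpha> p n = transpose_mat B * B"
    using C_mat_factorization by metis
  then have "transpose_mat (C_mat \<alpha> p n) = C_mat \<alpha> p n" by (simp add: transpose_mult)
  then show ?thesis using assms C_mat_carrier[of n] by (metis carrier_matD index_transpose_mat(1))
qed

lemma checkerboard_C_mat: "checkerboard (C_mat \<alpha> p n)"
proof -
  obtain B where B: "B \<in> carrier_mat n n" "A_mat \<alpha> p n * B = 1\<^sub>m n" "B * A_mat \<alpha> p n = 1\<^sub>m n"
    "C_mat \<alpha> p n = transpose_mat B * B"
    using C_mat_factorization by metis
  have "checkerboard B"
    using checkerboard_inverse[OF A_mat_carrier B(1-3) checkerboard_A_mat] .
  then show ?thesis
    unfolding B(4) using B(1) by (intro checkerboard_mult checkerboard_transpose) auto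
qed

lemma ip_pderiv_p_eq_mat_app:
  assumes q: "degree q \<le> n" and i: "i < n"
  shows "ip (pderiv q) (p i) = mat_app (A_mat \<alpha> p n) n (\<lambda>j. ip q (p (Suc j))) i"
proof -
  have "pderiv q = (\<Sum>k\<le>n. Polynomial.smult (ip q (p k)) (pderiv (p k)))"
    by (subst p_expansion[OF q]) (simp add: higher_pderiv_sum[of 1, simplified] pderiv_smult)
  then have "ip (pderiv q) (p i) = (\<Sum>k\<le>n. ip q (p k) * ip (pderiv (p k)) (p i))"
    by (simp add: ip_sum_left ip_smult_left)
  also have "\<dots> = (\<Sum>j<n. ip q (p (Suc j)) * ip (pderiv (p (Suc j))) (p i))"
    using degree_p[of 0] pderiv_eq_0_iff[of "p 0"] by (simp add: sum.atMost_shift)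
  also have "\<dots> = mat_app (A_mat \<alpha> p n) n (\<lambda>j. ip q (p (Suc j))) i"
    unfolding mat_app_def using i by (intro sum.cong) (auto simp: A_mat_index)
  finally show ?thesis .
qed

lemma ip_pderiv_self_eq_sum_sq:
  assumes "degree q \<le> n" "n \<ge> 1"
  shows "ip (pderiv q) (pderiv q) = sum_sq n (\<lambda>i. ip (pderiv q) (p i))"
proof -
  have "degree (pderiv q) \<le> n - 1" using assms(1) by (simp add: degree_pderiv)
  then have "ip (pderiv q) (pderiv q) = (\<Sum>i\<le>n-1. (ip (pderiv q) (p i))\<^sup>2)" by (rule parseval)
  also have "{..n-1} = {..<n}" using assms(2) by auto
  finally show ?thesis unfolding sum_sq_def .
qed

lemma ip_self_eq_sum_sq:
  "degree q \<le> n \<Longrightarrow> ip q q = (ip q (p 0))\<^sup>2 + sum_sq n (\<lambda>j. ip q (p (Suc j)))"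
  using parseval[of q n] by (simp add: sum_sq_def sum.atMost_shift)

lemma min_rayleigh_C_mat_pderiv_le:
  assumes "n \<ge> 1" and min: "is_min_rayleigh (C_mat \<alpha> p n) n \<rho>" and q: "degree q \<le> n"
  shows "\<rho> * ip (pderiv q) (pderiv q) \<le> ip q q"
proof -
  obtain B where B: "B \<in> carrier_mat n n" "B * A_mat \<alpha> p n = 1\<^sub>m n" "C_mat \<alpha> p n = transpose_mat B * B"
    using C_mat_factorization by metis
  define y where "y j = ip q (p (Suc j))" for j
  define z where "z = mat_app (A_mat \<alpha> p n) n y"
  have "ip (pderiv q) (pderiv q) = sum_sq n z"
    unfolding ip_pderiv_self_eq_sum_sq[OF q \<open>n \<ge> 1\<close>] sum_sq_def z_def y_def
    using q by (intro sum.cong) (auto simp: ip_pderiv_p_eq_mat_app)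
  moreover have "quad_form (C_mat \<alpha> p n) n z = sum_sq n y"
    unfolding B(3) quad_form_transpose_mult[OF B(1)] sum_sq_def z_def
    using mat_app_mult_inverse[OF B(1) A_mat_carrier B(2)] by simp
  moreover have "sum_sq n y \<le> ip q q"
    unfolding ip_self_eq_sum_sq[OF q] y_def by simp
  ultimately show ?thesis using min unfolding is_min_rayleigh_def by (metis order.trans)
qed

lemma min_rayleigh_C_mat_pderiv_attained:
  assumes "n \<ge> 1" and min: "is_min_rayleigh (C_mat \<alpha> p n) n \<rho>"
  obtains q where "q \<noteq> 0" "degree q \<le> n" "\<rho> * ip (pderiv q) (pderiv q) = ip q q"
proof -
  obtain B where B: "B \<in> carrier_mat n n" "A_mat \<alpha> p n * B = 1\<^sub>m n" "C_mat \<alpha> p n = transpose_mat B * B"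
    using C_mat_factorization by metis
  obtain z where z: "sum_sq n z = 1" "quad_form (C_mat \<alpha> p n) n z = \<rho>"
    using min unfolding is_min_rayleigh_def by blast
  define y where "y = mat_app B n z"
  define q where "q = (\<Sum>k\<le>n. Polynomial.smult (if k = 0 then 0 else y (k - 1)) (p k))"
  have q_deg: "degree q \<le> n" unfolding q_def by (rule degree_sum_smult_p_le)
  have q_coord: "ip q (p (Suc j)) = y j" if "j < n" for j
    unfolding q_def using that by (subst ip_sum_smult_p) auto
  have "ip (pderiv q) (pderiv q) = sum_sq n z"
    unfolding ip_pderiv_self_eq_sum_sq[OF q_deg \<open>n \<ge> 1\<close>] sum_sq_def
    using mat_app_mult_inverse[OF A_mat_carrier B(1) B(2)]
    by (intro sum.cong) (auto simp: ip_pderiv_p_eq_mat_app[OF q_deg] mat_app_def q_coord y_def)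
  then have "ip (pderiv q) (pderiv q) = 1" using z(1) by simp
  moreover have "ip q q = \<rho>"
  proof -
    have "ip q (p 0) = 0" unfolding q_def by (subst ip_sum_smult_p) auto
    then have "ip q q = sum_sq n y"
      unfolding ip_self_eq_sum_sq[OF q_deg] sum_sq_def by (simp add: q_coord)
    also have "\<dots> = \<rho>" using z(2) unfolding B(3) quad_form_transpose_mult[OF B(1)] y_def by simp
    finally show ?thesis .
  qed
  moreover have "q \<noteq> 0" using \<open>ip (pderiv q) (pderiv q) = 1\<close> by auto
  ultimately show ?thesis using that q_deg by simp
qed

end

section \<open>Complex polynomials and the Markov constant\<close>

lemma Re_poly_of_real: "Re (poly P (complex_of_real t)) = poly (map_poly Re P) t"
  by (induction P) (simp_all add: map_poly_pCons)

lemma Im_poly_of_real: "Im (poly P (complex_of_real t)) = poly (map_poly Im P) t"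
  by (induction P) (simp_all add: map_poly_pCons)

lemma map_poly_Re_pderiv: "map_poly Re (pderiv P) = pderiv (map_poly Re P)"
  by (rule poly_eqI) (simp add: coeff_map_poly coeff_pderiv)

lemma map_poly_Im_pderiv: "map_poly Im (pderiv P) = pderiv (map_poly Im P)"
  by (rule poly_eqI) (simp add: coeff_map_poly coeff_pderiv)

lemma eq_0_if_map_poly_Re_Im_eq_0: "map_poly Re P = 0 \<Longrightarrow> map_poly Im P = 0 \<Longrightarrow> P = 0"
  by (rule poly_eqI) (metis coeff_0 coeff_map_poly complex_eqI zero_complex.sel)

lemma sqrt_divide_le_if_mult_le:
  fixes N D \<rho> :: real
  assumes "\<rho> * N \<le> D" "0 \<le> N" "0 < D" "0 < \<rho>"
  shows "sqrt N / sqrt D \<le> 1 / sqrt \<rho>"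
proof -
  have "sqrt N * sqrt \<rho> \<le> sqrt D"
    using assms by (metis real_sqrt_le_mono real_sqrt_mult mult.commute)
  with assms show ?thesis by (simp add: divide_le_eq field_simps)
qed

context orthonormal_poly_system
begin

lemma wnorm_eq_sqrt_ip:
  "wnorm \<alpha> P = sqrt (ip (map_poly Re P) (map_poly Re P) + ip (map_poly Im P) (map_poly Im P))"
proof -
  define a b where "a = map_poly Re P" and "b = map_poly Im P"
  have "(cmod (poly P (of_real t)))\<^sup>2 * gweight \<alpha> t
          = poly (a * a) t * gweight \<alpha> t + poly (b * b) t * gweight \<alpha> t" for t
    unfolding cmod_power2 Re_poly_of_real Im_poly_of_real a_def b_def
    by (simp add: power2_eq_square algebra_simps)
  then have "(LINT t:{-1<..<1}|lborel. (cmod (poly P (of_real t)))\<^sup>2 * gweight \<alpha> t)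
      = (LINT t:{-1<..<1}|lborel. poly (a * a) t * gweight \<alpha> t + poly (b * b) t * gweight \<alpha> t)"
    by simp
  also have "\<dots> = ip a a + ip b b"
    unfolding ip_eq_integral by (rule set_integral_add(2)[OF set_integrable_poly_gweight set_integrable_poly_gweight])
  finally have "(LINT t:{-1<..<1}|lborel. (cmod (poly P (of_real t)))\<^sup>2 * gweight \<alpha> t) = ip a a + ip b b" .
  then show ?thesis unfolding wnorm_def a_def b_def by simp
qed

text \<open>The real and imaginary parts of a complex polynomial are orthogonal in \<open>X\<close>, so a bound
  \<open>\<rho> \<parallel>q'\<parallel>\<^sup>2 \<le> \<parallel>q\<parallel>\<^sup>2\<close> for real polynomials carries over to complex ones.\<close>

lemma wnorm_pderiv_divide_le:
  assumes le: "\<And>q. degree q \<le> n \<Longrightarrow> \<rho> * ip (pderiv q) (pderiv q) \<le> ip q q"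
    and "\<rho> > 0" "P \<noteq> 0" "degree P \<le> n"
  shows "wnorm \<alpha> (pderiv P) / wnorm \<alpha> P \<le> 1 / sqrt \<rho>"
proof -
  define a b where "a = map_poly Re P" and "b = map_poly Im P"
  have deg: "degree a \<le> n" "degree b \<le> n"
    using \<open>degree P \<le> n\<close> map_poly_degree_leq[of Re P] map_poly_degree_leq[of Im P]
    unfolding a_def b_def by linarith+
  have "a \<noteq> 0 \<or> b \<noteq> 0" using \<open>P \<noteq> 0\<close> eq_0_if_map_poly_Re_Im_eq_0 unfolding a_def b_def by blast
  then have "ip a a + ip b b > 0"
    using ip_self_pos[of a] ip_self_pos[of b] ip_self_nonneg[of a] ip_self_nonneg[of b] by fastforce
  moreover have "\<rho> * (ip (pderiv a) (pderiv a) + ip (pderiv b) (pderiv b)) \<le> ip a a + ip b b"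
    using le[OF deg(1)] le[OF deg(2)] by (simp add: distrib_left)
  ultimately show ?thesis
    unfolding wnorm_eq_sqrt_ip map_poly_Re_pderiv map_poly_Im_pderiv a_def[symmetric] b_def[symmetric]
    using \<open>\<rho> > 0\<close> ip_self_nonneg by (intro sqrt_divide_le_if_mult_le) (auto intro: add_nonneg_nonneg)
qed

lemma markov_const_eqI:
  assumes le: "\<And>q. degree q \<le> n \<Longrightarrow> \<rho> * ip (pderiv q) (pderiv q) \<le> ip q q"
    and q0: "q0 \<noteq> 0" "degree q0 \<le> n" "\<rho> * ip (pderiv q0) (pderiv q0) = ip q0 q0"
  shows "markov_const \<alpha> n = 1 / sqrt \<rho>"
proof -
  have "\<rho> * ip (pderiv q0) (pderiv q0) > 0" using ip_self_pos[OF q0(1)] q0(3) by simp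
  then have "\<rho> > 0" "ip (pderiv q0) (pderiv q0) > 0"
    using ip_self_nonneg[of "pderiv q0"] by (auto simp: zero_less_mult_iff)
  define S where "S = {wnorm \<alpha> (pderiv P) / wnorm \<alpha> P | P. P \<noteq> 0 \<and> degree P \<le> n}"
  have "s \<le> 1 / sqrt \<rho>" if "s \<in> S" for s
    using that wnorm_pderiv_divide_le[OF le \<open>\<rho> > 0\<close>] unfolding S_def by blast
  moreover have "1 / sqrt \<rho> \<in> S"
  proof -
    define P where "P = map_poly complex_of_real q0"
    have Re_P: "map_poly Re P = q0" and Im_P: "map_poly Im P = 0"
      unfolding P_def by (simp_all add: poly_eq_iff coeff_map_poly)
    have "wnorm \<alpha> (pderiv P) / wnorm \<alpha> P = sqrt (ip (pderiv q0) (pderiv q0)) / sqrt (ip q0 q0)"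
      unfolding wnorm_eq_sqrt_ip map_poly_Re_pderiv map_poly_Im_pderiv Re_P Im_P by simp
    also have "\<dots> = 1 / sqrt \<rho>"
      using q0(3)[symmetric] \<open>ip (pderiv q0) (pderiv q0) > 0\<close> \<open>\<rho> > 0\<close> by (simp add: real_sqrt_mult)
    finally show ?thesis
      unfolding S_def using q0(1,2) Re_P
      by (intro CollectI exI[of _ P]) (auto simp: P_def degree_map_poly)
  qed
  ultimately show ?thesis unfolding markov_const_def S_def[symmetric] by (rule cSup_eq_maximum[rotated])
qed

end

theorem theorem7p2:
  fixes \<alpha> :: real and n :: nat and p :: "nat \<Rightarrow> real poly"
  assumes "\<alpha> > -1" and "orthonormal_polys \<alpha> p" and "n \<ge> 1"
  shows "markov_const \<alpha> n =
    1 / sqrt (if n div 2 = 0 then lambda_min (E_odd (C_mat \<alpha> p n) ((n+1) div 2))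
              else min (lambda_min (E_odd (C_mat \<alpha> p n) ((n+1) div 2)))
                       (lambda_min (E_even (C_mat \<alpha> p n) (n div 2))))"
proof -
  interpret orthonormal_poly_system \<alpha> p by unfold_locales (rule assms(2))
  let ?\<rho> = "if n div 2 = 0 then lambda_min (E_odd (C_mat \<alpha> p n) ((n+1) div 2))
            else min (lambda_min (E_odd (C_mat \<alpha> p n) ((n+1) div 2)))
                     (lambda_min (E_even (C_mat \<alpha> p n) (n div 2)))"
  have min: "is_min_rayleigh (C_mat \<alpha> p n) n ?\<rho>"
    using C_mat_carrier checkerboard_C_mat C_mat_symmetric \<open>n \<ge> 1\<close> by (rule is_min_rayleigh_checkerboard)
  obtain q where "q \<noteq> 0" "degree q \<le> n" "?\<rho> * ip (pderiv q) (pderiv q) = ip q q"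
    using min_rayleigh_C_mat_pderiv_attained[OF \<open>n \<ge> 1\<close> min] .
  with min_rayleigh_C_mat_pderiv_le[OF \<open>n \<ge> 1\<close> min] show ?thesis by (rule markov_const_eqI)
qed

end
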